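(* There exist polynomials $u,\alpha\in k[T]$ such that $$P_2(T)^p-P_2^\sigma(T^p)=m_p\bigl(\bar P'(T)^p\,u(T)-2\alpha(T)\,\bar P(T)^p\bigr)\quad\text{in } W_2(k)[T],$$ and for such $u,\alpha$ a lift of the Frobenius of $U_0$ to $U_1$ is determined by $$F_2(x)=x^p+m_p(u(x)),\qquad F_2(y)=y^p+y^p\,m_p(\alpha(x)).$$
   Context: $k$ is a finite field of characteristic $p\neq 2$, $W_2(k)=W(k)/p^2$, and $\sigma$ is the Frobenius of $W_2(k)$ lifting $a\mapsto a^p$; for $Q=\sum b_jT^j$ set $Q^\sigma=\sum\sigma(b_j)T^j$. Let $P\in W(k)[X]$ be monic of odd degree $d=2g+1$, separable over $\operatorname{Frac}W(k)$, with separable reduction $\bar P\in k[X]$; $P_2$ is its reduction mod $p^2$. $U_0=\operatorname{Spec}k[x,y]/(y^2-\bar P(x))$ and $U_1=\operatorname{Spec}W_2(k)[x,y]/(y^2-P_2(x))$. $m_p$ denotes the map from $k$-objects to $W_2(k)$-objects induced by multiplication by $p$ (coming from the exact sequence $0\to k\xrightarrow{m_p}W_2(k)\to k\to0$), e.g. $m_p:k[T]\to W_2(k)[T]$ and $m_p:\mathcal{O}(U_0)\to\mathcal{O}(U_1)$. A lift of Frobenius on $U_1$ means a $\sigma$-semilinear ring endomorphism $F_2$ of $\mathcal{O}(U_1)$ reducing mod $p$ to $f\mapsto f^p$. *)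

theory Defs
  imports "HOL-Computational_Algebra.Polynomial" "HOL-Computational_Algebra.Polynomial_Factorial"
begin

definition separable_poly :: "'a::field poly \<Rightarrow> bool" where
  "separable_poly f \<longleftrightarrow> coprime f (pderiv f)"

text \<open>Axiomatic description of (W_2(k), reduction, m_p, sigma).  For k perfect these conditions
  characterise W_2(k) (and sigma) up to unique isomorphism.\<close>
definition is_ring_hom :: "('a::comm_ring_1 \<Rightarrow> 'b::comm_ring_1) \<Rightarrow> bool" where
  "is_ring_hom f \<longleftrightarrow> f 1 = 1 \<and> (\<forall>a b. f (a + b) = f a + f b) \<and> (\<forall>a b. f (a * b) = f a * f b)"

definition W2_data :: "nat \<Rightarrow> ('r::comm_ring_1 \<Rightarrow> 'k::field) \<Rightarrow> ('k \<Rightarrow> 'r) \<Rightarrow> ('r \<Rightarrow> 'r) \<Rightarrow> bool" where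
  "W2_data p red mp sigma \<longleftrightarrow>
     is_ring_hom red \<and> surj red \<and>
     (\<forall>r. red r = 0 \<longleftrightarrow> (\<exists>s. r = of_nat p * s)) \<and>
     (\<forall>a b. mp (a + b) = mp a + mp b) \<and> inj mp \<and>
     (\<forall>r. mp (red r) = of_nat p * r) \<and>
     is_ring_hom sigma \<and> (\<forall>r. red (sigma r) = red r ^ p)"

text \<open>Coordinate ring O(U) of the affine curve y^2 = P(x) over a ring A,
  represented by its normal form A[x] \<oplus> A[x] y: the pair (a, b) stands for
  a(x) + b(x) y.\<close>
type_synonym 'a coord = "'a poly \<times> 'a poly"

definition cadd :: "'a::comm_ring_1 coord \<Rightarrow> 'a coord \<Rightarrow> 'a coord" where
  "cadd z w = (fst z + fst w, snd z + snd w)"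

definition cmul :: "'a::comm_ring_1 poly \<Rightarrow> 'a coord \<Rightarrow> 'a coord \<Rightarrow> 'a coord" where
  "cmul P z w = (fst z * fst w + snd z * snd w * P, fst z * snd w + snd z * fst w)"

definition cone :: "'a::comm_ring_1 coord" where "cone = (1, 0)"

definition cconst :: "'a::comm_ring_1 \<Rightarrow> 'a coord" where "cconst c = ([:c:], 0)"

definition cpolyx :: "'a::comm_ring_1 poly \<Rightarrow> 'a coord" where "cpolyx f = (f, 0)"

definition cx :: "'a::comm_ring_1 coord" where "cx = ([:0, 1:], 0)"
definition cy :: "'a::comm_ring_1 coord" where "cy = (0, 1)"

fun cpow :: "'a::comm_ring_1 poly \<Rightarrow> 'a coord \<Rightarrow> nat \<Rightarrow> 'a coord" where
  "cpow P z 0 = cone"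
| "cpow P z (Suc n) = cmul P z (cpow P z n)"

definition cred :: "('r::comm_ring_1 \<Rightarrow> 'k::comm_ring_1) \<Rightarrow> 'r coord \<Rightarrow> 'k coord" where
  "cred red z = (map_poly red (fst z), map_poly red (snd z))"

definition semilinear_endo :: "('r::comm_ring_1 \<Rightarrow> 'r) \<Rightarrow> 'r poly \<Rightarrow> ('r coord \<Rightarrow> 'r coord) \<Rightarrow> bool" where
  "semilinear_endo sigma P F \<longleftrightarrow>
     F cone = cone \<and>
     (\<forall>z w. F (cadd z w) = cadd (F z) (F w)) \<and>
     (\<forall>z w. F (cmul P z w) = cmul P (F z) (F w)) \<and>
     (\<forall>c. F (cconst c) = cconst (sigma c))"

definition frobenius_lift :: "nat \<Rightarrow> ('r::comm_ring_1 \<Rightarrow> 'k::comm_ring_1) \<Rightarrow> ('r \<Rightarrow> 'r) \<Rightarrow> 'r poly \<Rightarrow> ('r coord \<Rightarrow> 'r coord) \<Rightarrow> bool" where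
  "frobenius_lift p red sigma P F \<longleftrightarrow>
     semilinear_endo sigma P F \<and>
     (\<forall>z. cred red (F z) = cpow (map_poly red P) (cred red z) p)"

end

theory Submission
  imports Defs "HOL-Computational_Algebra.Primes"
begin

text \<open>Modulo p the polynomials P_2(T)^p and P_2^\<sigma>(T^p) agree, so their difference is m_p(D); a
  Bezout identity s P'^p + t P^p = 1 over k, coming from separability, splits D as required.
  Given u and \<alpha>, the Taylor expansion of P_2^\<sigma> at x^p + m_p(u) stops after the linear term
  because p^2 = 0 in W_2(k), and modulo p its derivative term is P'(x)^p; hence
  P_2^\<sigma>(x^p + m_p(u)) = (y^p (1 + m_p(\<alpha>)))^2, i.e. x \<mapsto> x^p + m_p(u),
  y \<mapsto> y^p (1 + m_p(\<alpha>)) respects y^2 = P_2(x). This endomorphism reduces to Frobenius since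
  (a + b y)^p = a^p + b^p P^((p-1)/2) y in characteristic p, and it is unique because x and y
  generate the coordinate ring.\<close>

locale ring_hom_map =
  fixes h :: "'a::comm_ring_1 \<Rightarrow> 'b::comm_ring_1"
  assumes is_ring_hom: "is_ring_hom h"
begin

lemma hom_add [simp]: "h (a + b) = h a + h b"
  using is_ring_hom unfolding is_ring_hom_def by blast

lemma hom_mult [simp]: "h (a * b) = h a * h b"
  using is_ring_hom unfolding is_ring_hom_def by blast

lemma hom_one [simp]: "h 1 = 1"
  using is_ring_hom unfolding is_ring_hom_def by blast

lemma hom_zero [simp]: "h 0 = 0"
  using hom_add[of 0 0] by simp

lemma hom_uminus [simp]: "h (- a) = - h a"
  using hom_add[of "- a" a] by (simp add: eq_neg_iff_add_eq_0)

lemma hom_diff [simp]: "h (a - b) = h a - h b"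
  using hom_add[of a "- b"] by simp

lemma hom_of_nat [simp]: "h (of_nat n) = of_nat n"
  by (induction n) simp_all

lemma map_poly_pCons [simp]: "map_poly h (pCons c f) = pCons (h c) (map_poly h f)"
  by (rule map_poly_pCons) simp

lemma map_poly_add [simp]: "map_poly h (f + g) = map_poly h f + map_poly h g"
  by (intro poly_eqI) (simp add: coeff_map_poly)

lemma map_poly_diff [simp]: "map_poly h (f - g) = map_poly h f - map_poly h g"
  by (intro poly_eqI) (simp add: coeff_map_poly)

lemma map_poly_smult [simp]: "map_poly h (smult c f) = smult (h c) (map_poly h f)"
  by (rule map_poly_smult) simp_all

lemma map_poly_mult [simp]: "map_poly h (f * g) = map_poly h f * map_poly h g"
  by (induction f) simp_all

lemma map_poly_power [simp]: "map_poly h (f ^ n) = map_poly h f ^ n"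
  by (induction n) simp_all

lemma map_poly_of_nat [simp]: "map_poly h (of_nat n) = of_nat n"
  by (simp add: of_nat_poly)

lemma map_poly_numeral [simp]: "map_poly h (numeral n) = numeral n"
  by (metis map_poly_of_nat of_nat_numeral)

lemma map_poly_monom [simp]: "map_poly h (monom c n) = monom (h c) n"
  by (simp add: map_poly_monom)

lemma map_poly_pcompose [simp]:
  "map_poly h (pcompose f g) = pcompose (map_poly h f) (map_poly h g)"
  by (induction f) (simp_all add: pcompose_pCons)

end

text \<open>The library's \<open>pderiv\<close> requires a ring without zero divisors, which \<open>W\<^sub>2(k)\<close> is not;
  this is the same recursion (\<open>pderiv_pCons\<close>) over an arbitrary commutative ring.\<close>
function formal_pderiv :: "'a::comm_ring_1 poly \<Rightarrow> 'a poly" where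
  "formal_pderiv (pCons a f) = (if f = 0 then 0 else f + pCons 0 (formal_pderiv f))"
  by (auto intro: pCons_cases)
termination by (relation "measure degree") simp_all

declare formal_pderiv.simps [simp del]

lemma formal_pderiv_0 [simp]: "formal_pderiv 0 = 0"
  using formal_pderiv.simps [of 0 0] by simp

lemma formal_pderiv_pCons: "formal_pderiv (pCons a f) = f + pCons 0 (formal_pderiv f)"
  by (simp add: formal_pderiv.simps)

lemma formal_pderiv_eq_pderiv: "formal_pderiv f = pderiv (f :: 'a::idom poly)"
  by (induction f) (simp_all add: formal_pderiv_pCons pderiv_pCons)

lemma (in ring_hom_map) map_poly_formal_pderiv [simp]:
  "map_poly h (formal_pderiv f) = formal_pderiv (map_poly h f)"
  by (induction f) (simp_all add: formal_pderiv_pCons)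

lemma pcompose_add_square_zero:
  fixes f g e :: "'a::comm_ring_1 poly"
  assumes "e * e = 0"
  shows "pcompose f (g + e) = pcompose f g + e * pcompose (formal_pderiv f) g"
proof (induction f)
  case (pCons c f)
  have "pcompose (pCons c f) (g + e) = [:c:] + (g + e) * (pcompose f g + e * pcompose (formal_pderiv f) g)"
    by (simp add: pcompose_pCons pCons)
  also have "\<dots> = [:c:] + g * pcompose f g + e * (pcompose f g + g * pcompose (formal_pderiv f) g)
      + (e * e) * pcompose (formal_pderiv f) g"
    by (simp add: algebra_simps)
  also have "\<dots> = pcompose (pCons c f) g + e * pcompose (formal_pderiv (pCons c f)) g"
    using assms by (simp add: pcompose_pCons formal_pderiv_pCons pcompose_add)
  finally show ?case .
qed simp

lemma of_nat_power_CHAR: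
  assumes "prime CHAR('a::comm_semiring_1)"
  shows "(of_nat n :: 'a) ^ CHAR('a) = of_nat n"
proof (induction n)
  case 0
  show ?case using prime_gt_0_nat[OF assms] by (simp add: power_0_left)
next
  case (Suc n)
  then show ?case using freshmans_dream[OF assms refl, of 1 "of_nat n"] by simp
qed

lemma poly_power_CHAR:
  fixes f :: "'a::comm_ring_1 poly"
  assumes "prime CHAR('a)"
  shows "f ^ CHAR('a) = pcompose (map_poly (\<lambda>c. c ^ CHAR('a)) f) (monom 1 CHAR('a))"
proof (induction f)
  case 0
  show ?case using prime_gt_0_nat[OF assms] by (simp add: power_0_left)
next
  case (pCons c f)
  have char: "prime CHAR('a poly)" using assms by simp
  have "pCons c f ^ CHAR('a) = ([:c:] + [:0, 1:] * f) ^ CHAR('a)"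
    by simp
  also have "\<dots> = [:c:] ^ CHAR('a) + ([:0, 1:] * f) ^ CHAR('a)"
    by (rule freshmans_dream[OF char]) simp
  also have "\<dots> = [:c ^ CHAR('a):] + monom 1 CHAR('a) * f ^ CHAR('a)"
    by (simp only: power_mult_distrib poly_const_pow monom_altdef smult_1_left)
  also have "\<dots> = pcompose (map_poly (\<lambda>c. c ^ CHAR('a)) (pCons c f)) (monom 1 CHAR('a))"
    using prime_gt_0_nat[OF assms] by (simp add: map_poly_pCons power_0_left pcompose_pCons pCons.IH)
  finally show ?case .
qed

lemma pderiv_map_poly_power_CHAR:
  fixes f :: "'a::idom poly"
  assumes "prime CHAR('a)"
  shows "pderiv (map_poly (\<lambda>c. c ^ CHAR('a)) f) = map_poly (\<lambda>c. c ^ CHAR('a)) (pderiv f)"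
proof -
  have "(1 + of_nat n :: 'a) ^ CHAR('a) = 1 + of_nat n" for n
    using of_nat_power_CHAR[OF assms, of "Suc n"] by simp
  then show ?thesis
    using prime_gt_0_nat[OF assms]
    by (intro poly_eqI) (simp add: coeff_pderiv coeff_map_poly power_mult_distrib)
qed

text \<open>No gcd structure is available on \<open>'a poly\<close> for an abstract field \<open>'a\<close>, so Bezout's
  identity is proved directly: the combinations of \<open>a\<close> and \<open>b\<close> form an ideal, and a nonzero
  element of least degree in it divides both.\<close>
lemma coprime_poly_imp_bezout:
  fixes a b :: "'a::field poly"
  assumes "coprime a b"
  obtains x y where "x * a + y * b = 1"
proof -
  define I where "I = {x * a + y * b |x y. True}"
  have a: "a \<in> I" and b: "b \<in> I"
    unfolding I_def by (auto intro: exI[of _ 0] exI[of _ 1])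
  have "a \<noteq> 0 \<or> b \<noteq> 0"
    using assms by auto
  then have "\<exists>d. d \<in> I \<and> d \<noteq> 0"
    using a b by blast
  then obtain d where d: "d \<in> I" "d \<noteq> 0"
    and least: "\<And>f. f \<in> I \<Longrightarrow> f \<noteq> 0 \<Longrightarrow> degree d \<le> degree f"
    using ex_has_least_nat[of "\<lambda>d. d \<in> I \<and> d \<noteq> 0" _ degree] by blast
  obtain xd yd where dd: "d = xd * a + yd * b"
    using d(1) unfolding I_def by blast
  have "d dvd f" if "f \<in> I" for f
  proof (rule ccontr)
    assume "\<not> d dvd f"
    then have nz: "f mod d \<noteq> 0" by (simp add: mod_eq_0_iff_dvd)
    obtain x y where f: "f = x * a + y * b"
      using \<open>f \<in> I\<close> unfolding I_def by blast
    have "f mod d = (x - f div d * xd) * a + (y - f div d * yd) * b"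
      by (simp add: minus_div_mult_eq_mod[symmetric] f dd algebra_simps)
    then have "f mod d \<in> I" unfolding I_def by blast
    then have "degree d \<le> degree (f mod d)" using least nz by blast
    with degree_mod_less'[OF d(2) nz] show False by simp
  qed
  then have "is_unit d"
    using assms a b by (simp add: coprime_def)
  then obtain e where "1 = d * e" by (auto elim: dvdE)
  then have "(e * xd) * a + (e * yd) * b = 1"
    by (simp add: dd algebra_simps)
  then show ?thesis by (rule that)
qed

lemma cpow_cpolyx: "cpow Q (cpolyx f) n = cpolyx (f ^ n)"
  by (induction n) (simp_all add: cpolyx_def cone_def cmul_def)

lemma cpow_cy_even: "cpow Q cy (2 * k) = cpolyx (Q ^ k)"
proof (induction k)
  case (Suc k)
  have k: "2 * Suc k = Suc (Suc (2 * k))" by simp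
  show ?case
    unfolding k cpow.simps Suc.IH by (simp add: cpolyx_def cmul_def cy_def)
qed (simp add: cpolyx_def cone_def)

lemma cpow_cy_odd: "cpow Q cy (Suc (2 * k)) = (0, Q ^ k)"
  unfolding cpow.simps cpow_cy_even by (simp add: cpolyx_def cmul_def cy_def)

text \<open>The normal form \<open>a + b y\<close> viewed as a polynomial in \<open>y\<close>; multiplication in the
  coordinate ring is multiplication modulo \<open>curve_poly Q = y\<^sup>2 - Q\<close>.\<close>
definition coord_poly :: "'a::comm_ring_1 coord \<Rightarrow> 'a poly poly" where
  "coord_poly z = [:fst z, snd z:]"

definition curve_poly :: "'a::comm_ring_1 poly \<Rightarrow> 'a poly poly" where
  "curve_poly Q = [:- Q, 0, 1:]"

lemma coord_poly_cmul:
  "coord_poly (cmul Q z w) = coord_poly z * coord_poly w - smult (snd z * snd w) (curve_poly Q)"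
  by (simp add: coord_poly_def curve_poly_def cmul_def algebra_simps)

lemma curve_poly_dvd_coord_poly_cpow: "curve_poly Q dvd coord_poly (cpow Q z n) - coord_poly z ^ n"
proof (induction n)
  case 0
  then show ?case by (simp add: coord_poly_def cone_def one_pCons)
next
  case (Suc n)
  then obtain r where r: "coord_poly (cpow Q z n) - coord_poly z ^ n = curve_poly Q * r"
    by (auto elim: dvdE)
  have "coord_poly (cpow Q z (Suc n)) - coord_poly z ^ Suc n
      = coord_poly z * (coord_poly (cpow Q z n) - coord_poly z ^ n)
        - smult (snd z * snd (cpow Q z n)) (curve_poly Q)"
    by (simp add: coord_poly_cmul algebra_simps)
  also have "\<dots> = curve_poly Q * (coord_poly z * r - [:snd z * snd (cpow Q z n):])"
    by (simp add: r algebra_simps)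
  finally show ?case by simp
qed

lemma coord_eq_if_curve_poly_dvd:
  fixes z w :: "'a::idom coord"
  assumes "curve_poly Q dvd coord_poly z - coord_poly w"
  shows "z = w"
proof -
  have "coord_poly z - coord_poly w = 0"
  proof (rule ccontr)
    assume "coord_poly z - coord_poly w \<noteq> 0"
    then have "degree (curve_poly Q) \<le> degree (coord_poly z - coord_poly w)"
      using assms by (rule dvd_imp_degree_le[rotated])
    then show False by (simp add: curve_poly_def coord_poly_def split: if_splits)
  qed
  then show ?thesis by (simp add: coord_poly_def prod_eq_iff)
qed

lemma cpow_CHAR:
  fixes Q a b :: "'a::idom poly"
  assumes "prime CHAR('a)" and "CHAR('a) = Suc (2 * k)"
  shows "cpow Q (a, b) CHAR('a) = (a ^ CHAR('a), b ^ CHAR('a) * Q ^ k)"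
proof (rule coord_eq_if_curve_poly_dvd)
  let ?C = "CHAR('a)" and ?Y = "[:0, 1:] :: 'a poly poly"
  have char: "prime CHAR('a poly poly)" using assms(1) by simp
  have "coord_poly (a, b) ^ ?C = ([:a:] + [:b:] * ?Y) ^ ?C"
    by (simp add: coord_poly_def)
  also have "\<dots> = [:a:] ^ ?C + ([:b:] * ?Y) ^ ?C"
    by (rule freshmans_dream[OF char]) simp
  finally have dream: "coord_poly (a, b) ^ ?C = [:a ^ ?C:] + [:b ^ ?C:] * ?Y ^ ?C"
    by (simp only: power_mult_distrib poly_const_pow)
  have "curve_poly Q dvd [:0, Q ^ k:] - ?Y ^ ?C"
    using curve_poly_dvd_coord_poly_cpow[of Q cy ?C]
    unfolding assms(2) cpow_cy_odd by (simp add: coord_poly_def cy_def)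
  then have "curve_poly Q dvd [:b ^ ?C:] * (?Y ^ ?C - [:0, Q ^ k:])"
    by (intro dvd_mult) (metis dvd_minus_iff minus_diff_eq)
  with curve_poly_dvd_coord_poly_cpow[of Q "(a, b)" ?C]
  have "curve_poly Q dvd (coord_poly (cpow Q (a, b) ?C) - coord_poly (a, b) ^ ?C)
      + [:b ^ ?C:] * (?Y ^ ?C - [:0, Q ^ k:])"
    by (rule dvd_add)
  also have "\<dots> = coord_poly (cpow Q (a, b) ?C) - coord_poly (a ^ ?C, b ^ ?C * Q ^ k)"
    unfolding dream by (simp add: coord_poly_def algebra_simps)
  finally show "curve_poly Q dvd \<dots>" .
qed

definition coord_subst :: "('a::comm_ring_1 \<Rightarrow> 'a) \<Rightarrow> 'a poly \<Rightarrow> 'a poly \<Rightarrow> 'a coord \<Rightarrow> 'a coord" where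
  "coord_subst sigma q w z =
     (pcompose (map_poly sigma (fst z)) q, pcompose (map_poly sigma (snd z)) q * w)"

lemma semilinear_endo_coord_subst:
  assumes "is_ring_hom sigma" and "pcompose (map_poly sigma P) q = w * w * P"
  shows "semilinear_endo sigma P (coord_subst sigma q w)"
proof -
  interpret sigma: ring_hom_map sigma by unfold_locales (fact assms(1))
  show ?thesis
    unfolding semilinear_endo_def
    using assms(2)
    by (simp add: coord_subst_def cone_def cadd_def cmul_def cconst_def pcompose_1 pcompose_add
        pcompose_mult algebra_simps)
qed

lemma semilinear_endo_eqI:
  assumes F: "semilinear_endo sigma P F" and G: "semilinear_endo sigma P G"
    and "F cx = G cx" and "F cy = G cy"
  shows "F = G"
proof
  have add: "H (cadd u v) = cadd (H u) (H v)" and mult: "H (cmul P u v) = cmul P (H u) (H v)"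
    and const: "H (cconst c) = cconst (sigma c)" if "semilinear_endo sigma P H" for H u v c
    using that unfolding semilinear_endo_def by blast+
  note hom = add[OF F] add[OF G] mult[OF F] mult[OF G] const[OF F] const[OF G]
  have polyx: "F (a, 0) = G (a, 0)" for a
  proof (induction a)
    case 0
    have zero: "(0, 0) = cconst 0" by (simp add: cconst_def)
    show ?case by (simp only: zero hom)
  next
    case (pCons c a)
    have pCons_eq: "(pCons c a, 0) = cadd (cconst c) (cmul P cx (a, 0))"
      by (simp add: cadd_def cconst_def cmul_def cx_def)
    show ?case by (simp only: pCons_eq hom pCons.IH \<open>F cx = G cx\<close>)
  qed
  fix z :: "'a coord"
  have z: "z = cadd (fst z, 0) (cmul P (snd z, 0) cy)"
    by (simp add: cadd_def cmul_def cy_def)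
  show "F z = G z"
    by (subst (1 2) z) (simp only: hom polyx \<open>F cy = G cy\<close>)
qed

locale W2_structure =
  fixes p :: nat and red :: "'r::comm_ring_1 \<Rightarrow> 'k::field"
    and mp :: "'k \<Rightarrow> 'r" and sigma :: "'r \<Rightarrow> 'r"
  assumes W2_data: "W2_data p red mp sigma" and prime_p: "prime p" and CHAR_k: "CHAR('k) = p"
begin

sublocale red: ring_hom_map red
  using W2_data by unfold_locales (simp add: W2_data_def)

sublocale sigma: ring_hom_map sigma
  using W2_data by unfold_locales (simp add: W2_data_def)

lemma red_eq_0_iff: "red r = 0 \<longleftrightarrow> (\<exists>s. r = of_nat p * s)"
  using W2_data by (simp add: W2_data_def)

lemma mp_add: "mp (a + b) = mp a + mp b"
  using W2_data by (simp add: W2_data_def)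

lemma mp_red: "mp (red r) = of_nat p * r"
  using W2_data by (simp add: W2_data_def)

lemma red_sigma: "red (sigma r) = red r ^ p"
  using W2_data by (simp add: W2_data_def)

lemma mp_0 [simp]: "mp 0 = 0"
  using mp_add[of 0 0] by simp

lemma prime_CHAR_k: "prime CHAR('k)"
  using prime_p CHAR_k by simp

lemma of_nat_p_eq_0 [simp]: "(of_nat p :: 'k) = 0"
  using of_nat_CHAR CHAR_k by metis

lemma of_nat_p_mult_self: "(of_nat p :: 'r) * of_nat p = 0"
  using mp_red[of "of_nat p"] by simp

lemma two_neq_0:
  assumes "p \<noteq> 2"
  shows "(2 :: 'k) \<noteq> 0"
proof
  assume "(2 :: 'k) = 0"
  then have "p dvd 2"
    using of_nat_eq_0_iff_char_dvd[where 'a='k, of 2] CHAR_k by simp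
  with assms prime_p show False
    using prime_nat_iff two_is_prime_nat by blast
qed

lemma map_poly_red_surj: "\<exists>h. f = map_poly red h"
proof (induction f)
  case (pCons c f)
  obtain h where "f = map_poly red h" using pCons.IH by blast
  moreover obtain c' where "c = red c'"
    using W2_data unfolding W2_data_def by (metis surjD)
  ultimately show ?case by (intro exI[of _ "pCons c' h"]) simp
qed (intro exI[of _ 0], simp)

lemma map_poly_mp_red: "map_poly mp (map_poly red h) = smult (of_nat p) h"
  by (intro poly_eqI) (simp add: coeff_map_poly mp_red)

lemma smult_p_eq_0: "map_poly red h = 0 \<Longrightarrow> smult (of_nat p) h = 0"
proof (intro poly_eqI)
  fix n assume "map_poly red h = 0"
  then have "red (coeff h n) = 0" by (metis coeff_0 coeff_map_poly red.hom_zero)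
  then obtain s where "coeff h n = of_nat p * s" using red_eq_0_iff by blast
  then show "coeff (smult (of_nat p) h) n = coeff 0 n"
    by (simp add: of_nat_p_mult_self flip: mult.assoc)
qed

lemma map_poly_mp_eq_smult_p: "\<exists>h. map_poly mp u = smult (of_nat p) h"
  using map_poly_red_surj[of u] map_poly_mp_red by metis

lemma map_poly_red_mp [simp]: "map_poly red (map_poly mp u) = 0"
  using map_poly_mp_eq_smult_p[of u] by auto

lemma map_poly_mp_mult_mp [simp]: "map_poly mp u * map_poly mp v = 0"
  using map_poly_mp_eq_smult_p[of u] map_poly_mp_eq_smult_p[of v]
  by (auto simp: of_nat_p_mult_self)

lemma map_poly_mp_mult_cong:
  assumes "map_poly red f = map_poly red g"
  shows "map_poly mp u * f = map_poly mp u * g"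
proof -
  obtain h where h: "map_poly mp u = smult (of_nat p) h" using map_poly_mp_eq_smult_p by blast
  have "smult (of_nat p) (f - g) = 0" using assms by (intro smult_p_eq_0) simp
  then have "smult (of_nat p) f = smult (of_nat p) g" by (simp add: smult_diff_right)
  then show ?thesis unfolding h by (metis mult_smult_left mult_smult_right)
qed

lemma map_poly_mp_diff: "map_poly mp (u - v) = map_poly mp u - map_poly mp v"
proof -
  obtain u' v' where "u = map_poly red u'" and "v = map_poly red v'"
    using map_poly_red_surj by metis
  then show ?thesis by (simp flip: red.map_poly_diff add: map_poly_mp_red smult_diff_right)
qed

lemma map_poly_mp_mult_red: "map_poly mp (map_poly red f * u) = f * map_poly mp u"
proof -
  obtain u' where "u = map_poly red u'" using map_poly_red_surj by metis
  then show ?thesis by (simp flip: red.map_poly_mult add: map_poly_mp_red)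
qed

lemma map_poly_red_eq_0_imp_mp_image: "map_poly red h = 0 \<Longrightarrow> \<exists>D. h = map_poly mp D"
proof (induction h)
  case (pCons c h)
  then obtain D s where "h = map_poly mp D" and "c = of_nat p * s"
    using red_eq_0_iff by auto
  then show ?case
    by (intro exI[of _ "pCons (red s) D"]) (simp add: map_poly_pCons mp_red)
qed (intro exI[of _ 0], simp)

lemma map_poly_red_sigma:
  "map_poly red (map_poly sigma f) = map_poly (\<lambda>c. c ^ p) (map_poly red f)"
  using prime_gt_0_nat[OF prime_p]
  by (simp add: map_poly_map_poly o_def red_sigma power_0_left)

lemmas poly_power_p = poly_power_CHAR[OF prime_CHAR_k, unfolded CHAR_k]

lemma map_poly_red_frobenius_defect:
  "map_poly red (P ^ p - pcompose (map_poly sigma P) (monom 1 p)) = 0"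
  by (simp add: map_poly_red_sigma poly_power_p[symmetric])

lemma frobenius_defect_decomposition:
  assumes "separable_poly (map_poly red P)" and "p \<noteq> 2"
  shows "\<exists>u \<alpha>. P ^ p - pcompose (map_poly sigma P) (monom 1 p)
     = map_poly mp (pderiv (map_poly red P) ^ p * u - 2 * \<alpha> * map_poly red P ^ p)"
proof -
  let ?P = "map_poly red P"
  obtain D where D: "P ^ p - pcompose (map_poly sigma P) (monom 1 p) = map_poly mp D"
    using map_poly_red_eq_0_imp_mp_image[OF map_poly_red_frobenius_defect] by blast
  have "coprime (pderiv ?P) ?P"
    using assms(1) by (simp add: separable_poly_def coprime_commute)
  then obtain x y where xy: "x * pderiv ?P + y * ?P = 1"
    by (rule coprime_poly_imp_bezout)
  have "prime CHAR('k poly)" and "p = CHAR('k poly)"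
    using prime_CHAR_k CHAR_k by simp_all
  then have "(x * pderiv ?P + y * ?P) ^ p = (x * pderiv ?P) ^ p + (y * ?P) ^ p"
    by (rule freshmans_dream)
  then have bezout: "x ^ p * pderiv ?P ^ p + y ^ p * ?P ^ p = 1"
    by (simp add: xy power_mult_distrib)
  define \<alpha> where "\<alpha> = smult (- inverse 2) (D * y ^ p)"
  have "2 * \<alpha> = - (D * y ^ p)"
    using two_neq_0[OF assms(2)] by (simp add: \<alpha>_def numeral_poly)
  then have "pderiv ?P ^ p * (D * x ^ p) - 2 * \<alpha> * ?P ^ p
      = D * (x ^ p * pderiv ?P ^ p + y ^ p * ?P ^ p)"
    by (simp add: algebra_simps)
  then have "pderiv ?P ^ p * (D * x ^ p) - 2 * \<alpha> * ?P ^ p = D"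
    by (simp only: bezout mult_1_right)
  then show ?thesis
    unfolding D by (intro exI[of _ "D * x ^ p"] exI[of _ \<alpha>]) simp
qed

lemma frobenius_lift_coord_subst:
  assumes "p = Suc (2 * k)" and "pcompose (map_poly sigma P) q = w * w * P"
    and "map_poly red q = monom 1 p" and "map_poly red w = map_poly red P ^ k"
  shows "frobenius_lift p red sigma P (coord_subst sigma q w)"
proof -
  have "cred red (coord_subst sigma q w z) = cpow (map_poly red P) (cred red z) p" for z
    using cpow_CHAR[where 'a='k, unfolded CHAR_k, OF prime_p assms(1)]
    by (simp add: cred_def coord_subst_def assms(3,4) map_poly_red_sigma
        poly_power_p[symmetric])
  then show ?thesis
    unfolding frobenius_lift_def
    using semilinear_endo_coord_subst[OF sigma.is_ring_hom assms(2)] by blast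
qed

lemma pcompose_sigma_lift_eq_square:
  assumes "p = Suc (2 * k)"
    and "P ^ p - pcompose (map_poly sigma P) (monom 1 p)
      = formal_pderiv P ^ p * map_poly mp u - 2 * P ^ p * map_poly mp \<alpha>"
  shows "pcompose (map_poly sigma P) (monom 1 p + map_poly mp u)
    = (P ^ k * (1 + map_poly mp \<alpha>)) * (P ^ k * (1 + map_poly mp \<alpha>)) * P"
proof -
  let ?S = "map_poly sigma P" and ?X = "monom 1 p :: 'r poly"
    and ?e = "map_poly mp u" and ?a = "map_poly mp \<alpha>"
  have "map_poly red (pcompose (formal_pderiv ?S) ?X) = map_poly red (formal_pderiv P ^ p)"
    by (simp add: map_poly_red_sigma formal_pderiv_eq_pderiv poly_power_p[symmetric]
        pderiv_map_poly_power_CHAR[OF prime_CHAR_k, unfolded CHAR_k])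
  then have derivative: "?e * pcompose (formal_pderiv ?S) ?X = ?e * formal_pderiv P ^ p"
    by (rule map_poly_mp_mult_cong)
  have "pcompose ?S (?X + ?e) = pcompose ?S ?X + ?e * pcompose (formal_pderiv ?S) ?X"
    by (rule pcompose_add_square_zero) simp
  also have "\<dots> = P ^ p * (1 + 2 * ?a)"
    using assms(2) unfolding derivative by (simp add: algebra_simps)
  also have "P ^ p = P ^ k * P ^ k * P"
    unfolding assms(1) power_Suc mult_2 power_add by (simp only: ac_simps)
  also have "1 + 2 * ?a = (1 + ?a) * (1 + ?a)"
    by (simp add: distrib_left distrib_right)
  finally show ?thesis
    by (simp only: ac_simps)
qed

lemma frobenius_lift_exists:
  assumes "p \<noteq> 2"
    and defect: "P ^ p - pcompose (map_poly sigma P) (monom 1 p)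
      = map_poly mp (pderiv (map_poly red P) ^ p * u - 2 * \<alpha> * map_poly red P ^ p)"
  shows "\<exists>F. frobenius_lift p red sigma P F
    \<and> F cx = cadd (cpow P cx p) (cpolyx (map_poly mp u))
    \<and> F cy = cadd (cpow P cy p) (cmul P (cpow P cy p) (cpolyx (map_poly mp \<alpha>)))"
proof -
  obtain k where k: "p = Suc (2 * k)"
    using prime_odd_nat[OF prime_p] prime_ge_2_nat[OF prime_p] assms(1)
    by (metis oddE Suc_eq_plus1 le_neq_implies_less)
  define q where "q = monom 1 p + map_poly mp u"
  define w where "w = P ^ k * (1 + map_poly mp \<alpha>)"
  have "pderiv (map_poly red P) ^ p * u - 2 * \<alpha> * map_poly red P ^ p
      = map_poly red (formal_pderiv P ^ p) * u - map_poly red (2 * P ^ p) * \<alpha>"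
    by (simp add: formal_pderiv_eq_pderiv)
  then have "P ^ p - pcompose (map_poly sigma P) (monom 1 p)
      = formal_pderiv P ^ p * map_poly mp u - 2 * P ^ p * map_poly mp \<alpha>"
    unfolding defect by (simp only: map_poly_mp_diff map_poly_mp_mult_red)
  then have "pcompose (map_poly sigma P) q = w * w * P"
    unfolding q_def w_def by (rule pcompose_sigma_lift_eq_square[OF k])
  then have "frobenius_lift p red sigma P (coord_subst sigma q w)"
    by (rule frobenius_lift_coord_subst[OF k]) (simp_all add: q_def w_def)
  moreover have "coord_subst sigma q w cx = cadd (cpow P cx p) (cpolyx (map_poly mp u))"
    unfolding cx_def cpolyx_def[symmetric] cpow_cpolyx
    by (simp add: coord_subst_def cpolyx_def cadd_def q_def monom_altdef pcompose_pCons)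
  moreover have "coord_subst sigma q w cy
      = cadd (cpow P cy p) (cmul P (cpow P cy p) (cpolyx (map_poly mp \<alpha>)))"
    unfolding k cpow_cy_odd
    by (simp add: coord_subst_def cy_def cadd_def cmul_def cpolyx_def w_def pcompose_1 algebra_simps)
  ultimately show ?thesis by blast
qed

end

theorem proposition5p2p3:
  fixes p g :: nat
    and red :: "'r::comm_ring_1 \<Rightarrow> 'k::{field,finite}"
    and mp :: "'k \<Rightarrow> 'r" and sigma :: "'r \<Rightarrow> 'r"
    and P2 :: "'r poly"
  assumes "prime p" and "p \<noteq> 2" and "CHAR('k) = p"
    and "W2_data p red mp sigma"
    and "lead_coeff P2 = 1" and "degree P2 = 2 * g + 1"
    and "separable_poly (map_poly red P2)"
  shows "(\<exists>u \<alpha> :: 'k poly.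
            P2 ^ p - pcompose (map_poly sigma P2) (monom 1 p)
              = map_poly mp (pderiv (map_poly red P2) ^ p * u - 2 * \<alpha> * (map_poly red P2) ^ p))
       \<and> (\<forall>u \<alpha> :: 'k poly.
            P2 ^ p - pcompose (map_poly sigma P2) (monom 1 p)
              = map_poly mp (pderiv (map_poly red P2) ^ p * u - 2 * \<alpha> * (map_poly red P2) ^ p)
            \<longrightarrow> (\<exists>F. frobenius_lift p red sigma P2 F
                    \<and> F cx = cadd (cpow P2 cx p) (cpolyx (map_poly mp u))
                    \<and> F cy = cadd (cpow P2 cy p) (cmul P2 (cpow P2 cy p) (cpolyx (map_poly mp \<alpha>))))
              \<and> (\<forall>F G. semilinear_endo sigma P2 F \<and> semilinear_endo sigma P2 G
                    \<and> F cx = G cx \<and> F cy = G cy \<longrightarrow> F = G))"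
proof -
  interpret W2_structure p red mp sigma
    using assms(1,3,4) by unfold_locales
  show ?thesis
    by (intro conjI allI impI frobenius_defect_decomposition[OF assms(7,2)]
        frobenius_lift_exists[OF assms(2)]) (auto intro: semilinear_endo_eqI)
qed

end
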